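(* Let $m\ge1$, let $A_1,\dots,A_m\in\mathbb{C}^{n\times n}$ be invertible, let $p_1,\dots,p_m>0$, and let $Q\in\mathbb{C}^{n\times n}$ be Hermitian positive definite. Then the equation $$X-\sum_{i=1}^{m}A_i^*X^{p_i}A_i=Q$$ has a Hermitian positive definite solution $X$ if and only if each $A_i$ can be factored as $$A_i=(U^*MU)^{-p_i/2}\,V_i\,N\,U,\qquad i=1,\dots,m,$$ where $U$ is unitary, $M$ is a real diagonal matrix with $M>UQU^*$, $N$ is Hermitian positive definite with $M-N^2=UQU^*$, and $V_1,\dots,V_m\in\mathbb{C}^{n\times n}$ satisfy that the block column $\begin{pmatrix}V_1\\ \vdots\\ V_m\end{pmatrix}$ is column orthonormal, i.e. $\sum_{i=1}^m V_i^*V_i=I$. In this case $X=U^*MU$ is a solution.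
   Context: For Hermitian $X,Y$, $X>Y$ means $X-Y$ is positive definite. For a Hermitian positive definite matrix $P$ and real $t$, $P^t$ is the principal matrix power defined via the spectral decomposition. *)

theory Defs
  imports "HOL-Analysis.Analysis"
begin

definition cadj :: "complex^'n^'m \<Rightarrow> complex^'m^'n" where
  "cadj A = (\<chi> i j. cnj (A $ j $ i))"

definition hermitian :: "complex^'n^'n \<Rightarrow> bool" where
  "hermitian A \<longleftrightarrow> cadj A = A"

definition unitary :: "complex^'n^'n \<Rightarrow> bool" where
  "unitary U \<longleftrightarrow> cadj U ** U = mat 1 \<and> U ** cadj U = mat 1"

definition pos_def :: "complex^'n^'n \<Rightarrow> bool" where
  "pos_def A \<longleftrightarrow> hermitian A \<and>
     (\<forall>x :: complex^'n. x \<noteq> 0 \<longrightarrow> 0 < Re (\<Sum>i\<in>UNIV. cnj (x $ i) * (A *v x) $ i))"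

definition loewner_gt :: "complex^'n^'n \<Rightarrow> complex^'n^'n \<Rightarrow> bool" where
  "loewner_gt X Y \<longleftrightarrow> pos_def (X - Y)"

definition real_diag :: "complex^'n^'n \<Rightarrow> bool" where
  "real_diag M \<longleftrightarrow> (\<forall>i j. i \<noteq> j \<longrightarrow> M $ i $ j = 0) \<and> (\<forall>i. Im (M $ i $ i) = 0)"

definition mpow :: "complex^'n^'n \<Rightarrow> real \<Rightarrow> complex^'n^'n" where
  "mpow P t = (THE Y. \<exists>U D. unitary U \<and> real_diag D \<and> (\<forall>i. 0 < Re (D $ i $ i)) \<and>
      P = cadj U ** D ** U \<and>
      Y = cadj U ** (\<chi> i j. if i = j then complex_of_real (Re (D $ i $ i) powr t) else 0) ** U)"

end

theory Submission
  imports Defs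
begin

(* If X = U^* M U is a positive definite solution (M real diagonal), then
   G = M - U Q U^* = U (\<Sum>i. A_i^* X^(p_i) A_i) U^* is positive definite, so it has a
   positive square root N, and V_i = X^(p_i/2) A_i U^* N^(-1) satisfies \<Sum>i. V_i^* V_i = I
   and A_i = X^(-p_i/2) V_i N U.  Conversely, substituting such a factorization into the
   left-hand side collapses the sum to U^* N (\<Sum>i. V_i^* V_i) N U = U^* N^2 U = X - Q. *)

section \<open>The complex inner product\<close>

definition cinner :: "complex^'n \<Rightarrow> complex^'n \<Rightarrow> complex" where
  "cinner x y = (\<Sum>i\<in>UNIV. cnj (x $ i) * y $ i)"

lemma cinner_add_left: "cinner (x + y) z = cinner x z + cinner y z"
  by (simp add: cinner_def algebra_simps sum.distrib)

lemma cinner_add_right: "cinner z (x + y) = cinner z x + cinner z y"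
  by (simp add: cinner_def algebra_simps sum.distrib)

lemma cinner_diff_left: "cinner (x - y) z = cinner x z - cinner y z"
  by (simp add: cinner_def algebra_simps sum_subtractf)

lemma cinner_diff_right: "cinner z (x - y) = cinner z x - cinner z y"
  by (simp add: cinner_def algebra_simps sum_subtractf)

lemma cinner_smult_left: "cinner (c *s x) z = cnj c * cinner x z"
  by (simp add: cinner_def algebra_simps sum_distrib_left)

lemma cinner_smult_right: "cinner z (c *s x) = c * cinner z x"
  by (simp add: cinner_def algebra_simps sum_distrib_left)

lemma vec_scaleR_nth: "(c *\<^sub>R (x::complex^'n)) $ i = of_real c * x $ i"
  unfolding vector_scaleR_component by (rule scaleR_conv_of_real)

lemma cinner_scaleR_left: "cinner (c *\<^sub>R x) z = of_real c * cinner x z"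
  by (simp add: cinner_def vec_scaleR_nth algebra_simps sum_distrib_left
      del: vector_scaleR_component)

lemma cinner_scaleR_right: "cinner z (c *\<^sub>R x) = of_real c * cinner z x"
  by (simp add: cinner_def vec_scaleR_nth algebra_simps sum_distrib_left
      del: vector_scaleR_component)

lemma cinner_zero_right [simp]: "cinner x 0 = 0"
  by (simp add: cinner_def)

lemma cinner_commute: "cinner y x = cnj (cinner x y)"
  by (simp add: cinner_def mult.commute)

lemma Re_cinner: "Re (cinner x y) = x \<bullet> y"
  by (simp add: cinner_def inner_vec_def inner_complex_def)

lemma cinner_self: "cinner x x = of_real (x \<bullet> x)"
proof -
  have "Im (cinner x x) = 0"
    by (simp add: cinner_def)
  then show ?thesis
    using Re_cinner[of x x] by (simp add: complex_eq_iff)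
qed

lemma mv_scaleR: "(A::complex^'n^'m) *v (c *\<^sub>R x) = c *\<^sub>R (A *v x)"
  by (simp add: matrix_vector_mult_def vec_eq_iff vec_scaleR_nth sum_distrib_left mult_ac
      del: vector_scaleR_component)

section \<open>The adjoint and matrix algebra\<close>

lemma cadj_cadj [simp]: "cadj (cadj A) = A"
  by (simp add: cadj_def vec_eq_iff)

lemma cadj_mult: "cadj (A ** B) = cadj B ** cadj A"
  by (simp add: cadj_def matrix_matrix_mult_def vec_eq_iff mult.commute)

lemma cadj_add: "cadj (A + B) = cadj A + cadj B"
  by (simp add: cadj_def vec_eq_iff)

lemma cinner_mv: "cinner x (A *v y) = cinner (cadj A *v x) y"
  by (simp add: cinner_def cadj_def matrix_vector_mult_def sum_distrib_left sum_distrib_right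
      mult_ac) (rule sum.swap)

lemma hermitian_cinner: "hermitian A \<Longrightarrow> cinner x (A *v y) = cinner (A *v x) y"
  by (simp add: hermitian_def cinner_mv)

lemma matrix_diff_ldistrib: "(A::complex^'n^'m) ** (B - C) = A ** B - A ** C"
  by (simp add: matrix_matrix_mult_def vec_eq_iff algebra_simps sum_subtractf)

lemma matrix_diff_rdistrib: "((B::complex^'n^'m) - C) ** A = B ** A - C ** A"
  by (simp add: matrix_matrix_mult_def vec_eq_iff algebra_simps sum_subtractf)

lemma matrix_add_rdistrib: "((B::complex^'n^'m) + C) ** A = B ** A + C ** A"
  by (simp add: matrix_matrix_mult_def vec_eq_iff algebra_simps sum.distrib)

lemma sum_matrix_mult_right:
  "finite I \<Longrightarrow> (\<Sum>i\<in>I. f i) ** (A::complex^'n^'m) = (\<Sum>i\<in>I. f i ** A)"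
  by (induct rule: finite_induct) (auto simp: matrix_add_rdistrib)

lemma sum_matrix_mult_left:
  "finite I \<Longrightarrow> (A::complex^'n^'m) ** (\<Sum>i\<in>I. f i) = (\<Sum>i\<in>I. A ** f i)"
  by (induct rule: finite_induct) (auto simp: matrix_add_ldistrib)

text \<open>Unitary matrices cancel against their adjoints; the cancellation lemmas are stated
  for left-associated products, the normal form produced by matrix_mul_assoc.\<close>

lemma unitary_left_inverse: "unitary U \<Longrightarrow> cadj U ** U = mat 1"
  by (simp add: unitary_def)

lemma unitary_right_inverse: "unitary U \<Longrightarrow> U ** cadj U = mat 1"
  by (simp add: unitary_def)

lemma unitary_cancel_right: "unitary U \<Longrightarrow> X ** U ** cadj U = X"
  by (simp add: matrix_mul_assoc[symmetric] unitary_right_inverse)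

lemma unitary_cancel_left: "unitary U \<Longrightarrow> X ** cadj U ** U = X"
  by (simp add: matrix_mul_assoc[symmetric] unitary_left_inverse)

lemma left_invertible_inj: "B ** (A::complex^'n^'m) = mat 1 \<Longrightarrow> A *v x = 0 \<Longrightarrow> x = 0"
  by (metis matrix_vector_mul_assoc matrix_vector_mul_lid matrix_vector_mult_0_right)

lemma invertible_inj: "invertible (A::complex^'n^'n) \<Longrightarrow> A *v x = 0 \<Longrightarrow> x = 0"
  unfolding invertible_def using left_invertible_inj by blast

definition diagm :: "('n \<Rightarrow> complex) \<Rightarrow> complex^'n^'n" where
  "diagm f = (\<chi> i j. if i = j then f i else 0)"

lemma mult_diagm_nth: "(T ** diagm f) $ i $ j = T $ i $ j * f j"
  by (simp add: diagm_def matrix_matrix_mult_def if_distrib if_distribR cong: if_cong)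

lemma diagm_mult_nth: "(diagm f ** T) $ i $ j = f i * T $ i $ j"
  by (simp add: diagm_def matrix_matrix_mult_def if_distrib if_distribR cong: if_cong)

lemma diagm_mult: "diagm f ** diagm g = diagm (\<lambda>i. f i * g i)"
  by (simp add: vec_eq_iff mult_diagm_nth) (simp add: diagm_def)

lemma diagm_mv_nth: "(diagm f *v x) $ i = f i * x $ i"
  by (simp add: diagm_def matrix_vector_mult_def if_distrib if_distribR cong: if_cong)

lemma real_diag_diagm: "real_diag (diagm (\<lambda>i. of_real (d i)))"
  by (simp add: real_diag_def diagm_def)

lemma real_diag_eq_diagm: "real_diag D \<Longrightarrow> D = diagm (\<lambda>i. of_real (Re (D $ i $ i)))"
  by (auto simp: real_diag_def diagm_def vec_eq_iff complex_eq_iff)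

section \<open>Positive definite matrices\<close>

lemma pos_def_quad: "pos_def A \<longleftrightarrow> hermitian A \<and> (\<forall>x. x \<noteq> 0 \<longrightarrow> 0 < Re (cinner x (A *v x)))"
  by (simp add: pos_def_def cinner_def)

lemma pos_def_congruence:
  fixes A :: "complex^'b^'a" and P :: "complex^'a^'a"
  assumes P: "pos_def P" and inj: "\<And>x. A *v x = 0 \<Longrightarrow> x = 0"
  shows "pos_def (cadj A ** P ** A)"
  unfolding pos_def_quad
proof safe
  show "hermitian (cadj A ** P ** A)"
    using P by (simp add: hermitian_def pos_def_def cadj_mult matrix_mul_assoc)
next
  fix x :: "complex^'b"
  assume "x \<noteq> 0"
  then have "A *v x \<noteq> 0"
    using inj by blast
  then have "0 < Re (cinner (A *v x) (P *v (A *v x)))"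
    using P by (simp add: pos_def_quad)
  also have "cinner (A *v x) (P *v (A *v x)) = cinner x (cadj A *v (P *v (A *v x)))"
    using cinner_mv[of x "cadj A"] by simp
  also have "cadj A *v (P *v (A *v x)) = (cadj A ** P ** A) *v x"
    by (simp add: matrix_vector_mul_assoc matrix_mul_assoc)
  finally show "0 < Re (cinner x ((cadj A ** P ** A) *v x))" .
qed

lemma pos_def_unitary_congruence:
  assumes "pos_def P" and "unitary U"
  shows "pos_def (U ** P ** cadj U)"
  using pos_def_congruence[of P "cadj U", OF assms(1) left_invertible_inj[OF unitary_right_inverse[OF assms(2)]]]
  by simp

lemma pos_def_add: "pos_def A \<Longrightarrow> pos_def B \<Longrightarrow> pos_def (A + B)"
  by (auto simp: pos_def_quad hermitian_def cadj_add matrix_vector_mult_add_rdistrib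
      cinner_add_right intro: add_pos_pos)

lemma pos_def_sum:
  assumes "finite I" "I \<noteq> {}" "\<forall>i\<in>I. pos_def (f i)"
  shows "pos_def (\<Sum>i\<in>I. f i)"
  using assms by (induct rule: finite_ne_induct) (simp_all add: pos_def_add)

lemma pos_def_diag_pos:
  assumes "pos_def M"
  shows "0 < Re (M $ i $ i)"
proof -
  have "axis i 1 \<noteq> (0::complex^'a)"
    by simp
  then have "0 < Re (cinner (axis i 1) (M *v axis i 1))"
    using assms by (simp add: pos_def_quad)
  moreover have "cinner (axis i 1) (M *v axis i 1) = M $ i $ i"
    by (simp add: cinner_def axis_def matrix_vector_mult_def if_distrib if_distribR sum.delta
        cong: if_cong)
  ultimately show ?thesis by simp
qed

lemma pos_def_diagm:
  assumes "\<forall>i. 0 < d i"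
  shows "pos_def (diagm (\<lambda>i. of_real (d i)))"
  unfolding pos_def_quad
proof safe
  show "hermitian (diagm (\<lambda>i. of_real (d i)))"
    by (simp add: hermitian_def cadj_def diagm_def vec_eq_iff)
next
  fix x :: "complex^'a"
  assume "x \<noteq> 0"
  then obtain k where k: "x $ k \<noteq> 0"
    by (auto simp: vec_eq_iff)
  have quadratic_form: "Re (cinner x (diagm (\<lambda>i. of_real (d i)) *v x))
      = (\<Sum>i\<in>UNIV. d i * (Re (x $ i)^2 + Im (x $ i)^2))"
    by (simp add: cinner_def diagm_mv_nth power2_eq_square algebra_simps)
  have "0 < (\<Sum>i\<in>UNIV. d i * (Re (x $ i)^2 + Im (x $ i)^2))"
  proof (rule sum_pos2[where i = k])
    have "0 < Re (x $ k)^2 + Im (x $ k)^2"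
      using k by (metis complex_neq_0 power2_eq_square)
    then show "0 < d k * (Re (x $ k)^2 + Im (x $ k)^2)"
      using assms by simp
  qed (use assms in \<open>auto intro!: mult_nonneg_nonneg simp: less_imp_le\<close>)
  then show "0 < Re (cinner x (diagm (\<lambda>i. of_real (d i)) *v x))"
    by (simp only: quadratic_form)
qed

lemma loewner_gt_pos_def: "loewner_gt M R \<Longrightarrow> pos_def R \<Longrightarrow> pos_def M"
  unfolding loewner_gt_def using pos_def_add[of "M - R" R] by simp

section \<open>The spectral theorem for Hermitian matrices\<close>

text \<open>Fewer than CARD('n) vectors cannot span complex^'n: some nonzero
  vector is orthogonal to all of them.  (Real orthogonality to v j and
  \<i> *s v j is complex orthogonality.)\<close>

lemma exists_cinner_orthogonal:
  fixes v :: "nat \<Rightarrow> complex^'n"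
  assumes k: "k < CARD('n)"
  shows "\<exists>x. x \<noteq> 0 \<and> (\<forall>j<k. cinner (v j) x = 0)"
proof -
  define B where "B = v ` {..<k} \<union> (\<lambda>j. \<i> *s v j) ` {..<k}"
  have "card B \<le> card (v ` {..<k}) + card ((\<lambda>j. \<i> *s v j) ` {..<k})"
    unfolding B_def by (rule card_Un_le)
  also have "\<dots> \<le> k + k"
    by (intro add_mono) (metis card_image_le card_lessThan finite_lessThan)+
  finally have "dim B < DIM(complex^'n)"
    using k dim_le_card'[of B] by (simp add: B_def)
  then obtain x where x: "x \<noteq> 0" "\<And>y. y \<in> span B \<Longrightarrow> orthogonal x y"
    using orthogonal_to_subspace_exists by blast
  have "cinner (v j) x = 0" if j: "j < k" for j
  proof -
    have "orthogonal x (v j)" "orthogonal x (\<i> *s v j)"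
      using j by (auto intro!: x(2) span_base simp: B_def)
    then have "Re (cinner x (v j)) = 0" "Re (cinner x (\<i> *s v j)) = 0"
      by (simp_all add: orthogonal_def Re_cinner)
    then show ?thesis
      by (simp add: cinner_smult_right cinner_commute[of x] complex_eq_iff)
  qed
  with x show ?thesis by blast
qed

lemma quadratic_nonpos_linear_coeff:
  fixes a b :: real
  assumes a: "0 \<le> a" and h: "\<And>t. 2 * t * a + t^2 * b \<le> 0"
  shows "a = 0"
proof (rule ccontr)
  assume "a \<noteq> 0"
  with a have a: "0 < a" by simp
  define t where "t = a / (\<bar>b\<bar> + 1)"
  have t: "0 < t"
    using a by (simp add: t_def add_pos_nonneg)
  have "t * \<bar>b\<bar> = a * (\<bar>b\<bar> / (\<bar>b\<bar> + 1))"
    by (simp add: t_def)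
  also have "\<dots> \<le> a"
    using a by (intro mult_left_le) auto
  finally have "t * (t * \<bar>b\<bar>) \<le> t * a"
    using t by (simp add: mult_left_mono)
  moreover have "t^2 * (- \<bar>b\<bar>) \<le> t^2 * b"
    by (intro mult_left_mono) auto
  moreover have "t^2 * (- \<bar>b\<bar>) = - (t * (t * \<bar>b\<bar>))"
    by (simp add: power2_eq_square)
  moreover have "0 < t * a"
    using t a by simp
  ultimately show False
    using h[of t] by linarith
qed

lemma rayleigh_maximizer_eigenvector:
  fixes H :: "complex^'n^'n"
  assumes herm: "hermitian H" and C: "subspace C" and yC: "y \<in> C"
    and yy: "cinner y y = 1"
    and c: "c = cinner y (H *v y)" and wC: "H *v y - c *s y \<in> C"
    and max: "\<And>x. x \<in> C \<Longrightarrow> Re (cinner x (H *v x)) \<le> Re c * (x \<bullet> x)"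
  shows "H *v y = c *s y"
proof -
  define w where "w = H *v y - c *s y"
  define a where "a = w \<bullet> w"
  have cc: "cnj c = c"
    unfolding c using hermitian_cinner[OF herm, of y y] by (simp add: cinner_commute[of y])
  have wy: "cinner w y = 0"
    using hermitian_cinner[OF herm, of y y] cc yy
    by (simp add: w_def c cinner_diff_left cinner_smult_left)
  then have yw: "cinner y w = 0"
    by (simp add: cinner_commute[of y w])
  have wHy: "cinner w (H *v y) = cinner w w"
    by (simp add: w_def cinner_diff_right cinner_smult_right wy[unfolded w_def])
  have yHw: "cinner y (H *v w) = cnj (cinner w w)"
    using hermitian_cinner[OF herm, of y w] wHy by (simp add: cinner_commute[of "H *v y" w])
  have aw: "cinner w w = of_real a"
    by (simp add: a_def cinner_self)
  have "2 * t * a + t^2 * (Re (cinner w (H *v w)) - Re c * a) \<le> 0" for t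
  proof -
    have "y + t *\<^sub>R w \<in> C"
      using wC yC C by (simp add: w_def subspace_add subspace_mul)
    then have "Re (cinner (y + t *\<^sub>R w) (H *v (y + t *\<^sub>R w)))
        \<le> Re c * Re (cinner (y + t *\<^sub>R w) (y + t *\<^sub>R w))"
      using max by (simp add: Re_cinner)
    then show ?thesis
      by (simp add: c matrix_vector_right_distrib mv_scaleR cinner_add_left cinner_add_right
          cinner_scaleR_left cinner_scaleR_right wHy yHw aw yy wy yw power2_eq_square
          algebra_simps)
  qed
  then have "a = 0"
    by (intro quadratic_nonpos_linear_coeff) (simp_all add: a_def)
  then show ?thesis
    by (simp add: a_def w_def)
qed

text \<open>On a nontrivial real subspace C the Rayleigh quotient of H attains its maximum at a unit
  vector y (compactness of the unit sphere of C); the bound is stated in homogeneous form.\<close>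

lemma rayleigh_maximizer_exists:
  fixes H :: "complex^'n^'n"
  assumes C: "subspace C" and x0: "x0 \<in> C" "x0 \<noteq> 0"
  shows "\<exists>y\<in>C. cinner y y = 1 \<and>
    (\<forall>x\<in>C. Re (cinner x (H *v x)) \<le> Re (cinner y (H *v y)) * (x \<bullet> x))"
proof -
  define f where "f x = Re (cinner x (H *v x))" for x :: "complex^'n"
  define S where "S = C \<inter> sphere 0 1"
  have "compact S"
    unfolding S_def using closed_subspace[OF C] by (intro closed_Int_compact) auto
  moreover have "(1 / norm x0) *\<^sub>R x0 \<in> S"
    using C x0 by (simp add: S_def subspace_mul)
  moreover have "continuous_on S f"
    unfolding f_def cinner_def matrix_vector_mult_def by (intro continuous_intros)
  ultimately obtain y where yS: "y \<in> S" and ymax: "\<forall>z\<in>S. f z \<le> f y"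
    using continuous_attains_sup[of S f] by blast
  have f_scale: "f (r *\<^sub>R x) = r^2 * f x" for r x
    by (simp add: f_def cinner_scaleR_left cinner_scaleR_right mv_scaleR power2_eq_square)
  have "f x \<le> f y * (x \<bullet> x)" if xC: "x \<in> C" for x
  proof (cases "x = 0")
    case False
    then have "(1 / norm x) *\<^sub>R x \<in> S"
      using C xC by (simp add: S_def subspace_mul)
    then have "f ((1 / norm x) *\<^sub>R x) \<le> f y"
      using ymax by blast
    then have "(1 / norm x)^2 * f x \<le> f y"
      by (simp only: f_scale)
    then show ?thesis
      using False by (simp add: field_simps power2_norm_eq_inner[symmetric])
  qed (simp add: f_def)
  moreover have "y \<in> C" and "cinner y y = 1"
    using yS by (auto simp: S_def cinner_self power2_norm_eq_inner[symmetric])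
  ultimately show ?thesis
    unfolding f_def by blast
qed

text \<open>Given eigenvectors v j, j < k, with k < CARD('n), there is a further unit eigenvector
  orthogonal to all of them: their orthogonal complement is H-invariant, so the maximiser of
  the Rayleigh quotient on it is an eigenvector.\<close>

lemma next_eigenvector:
  fixes H :: "complex^'n^'n" and v :: "nat \<Rightarrow> complex^'n"
  assumes herm: "hermitian H" and ev: "\<forall>j<k. H *v v j = lam j *s v j" and k: "k < CARD('n)"
  shows "\<exists>y c. cinner y y = 1 \<and> (\<forall>j<k. cinner (v j) y = 0) \<and> H *v y = c *s y"
proof -
  define C where "C = {x::complex^'n. \<forall>j<k. cinner (v j) x = 0}"
  have C: "subspace C"
    by (simp add: subspace_def C_def cinner_add_right cinner_scaleR_right)
  obtain x0 where "x0 \<noteq> 0" "x0 \<in> C"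
    using exists_cinner_orthogonal[OF k] by (auto simp: C_def)
  then obtain y where yC: "y \<in> C" and yy: "cinner y y = 1"
    and max: "\<forall>x\<in>C. Re (cinner x (H *v x)) \<le> Re (cinner y (H *v y)) * (x \<bullet> x)"
    using rayleigh_maximizer_exists[OF C] by blast
  define c where "c = cinner y (H *v y)"
  have "cinner (v j) (H *v y) = 0" if "j < k" for j
    using that ev yC hermitian_cinner[OF herm, of "v j" y]
    by (simp add: cinner_smult_left C_def)
  then have "H *v y - c *s y \<in> C"
    using yC by (simp add: C_def cinner_diff_right cinner_smult_right)
  then have "H *v y = c *s y"
    using rayleigh_maximizer_eigenvector[OF herm C yC yy c_def] max by (simp add: c_def)
  then show ?thesis
    using yy yC unfolding C_def by blast
qed

lemma orthonormal_eigenvectors: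
  fixes H :: "complex^'n^'n"
  assumes herm: "hermitian H"
  shows "k \<le> CARD('n) \<Longrightarrow> \<exists>v lam. (\<forall>i<k. \<forall>j<k. cinner (v i) (v j) = (if i = j then 1 else 0)) \<and>
            (\<forall>j<k. H *v v j = lam j *s v j)"
proof (induct k)
  case (Suc k)
  then obtain v lam where orth: "\<forall>i<k. \<forall>j<k. cinner (v i) (v j) = (if i = j then 1 else 0)"
    and ev: "\<forall>j<k. H *v v j = lam j *s v j"
    by auto
  obtain y c where "cinner y y = 1" and y_orth: "\<forall>j<k. cinner (v j) y = 0" and "H *v y = c *s y"
    using next_eigenvector[OF herm ev] Suc(2) by auto
  moreover have "\<forall>j<k. cinner y (v j) = 0"
    using y_orth by (simp add: cinner_commute[of y])
  ultimately show ?case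
    using orth ev by (intro exI[of _ "v(k := y)"] exI[of _ "lam(k := c)"]) (auto simp: less_Suc_eq)
qed simp

lemma orthonormal_eigenbasis_diagonalizes:
  fixes H :: "complex^'n^'n" and w :: "'n \<Rightarrow> complex^'n"
  assumes orth: "\<And>a b. cinner (w a) (w b) = (if a = b then 1 else 0)"
    and ev: "\<And>a. H *v w a = lam a *s w a"
    and U: "U = (\<chi> a b. cnj (w a $ b))"
  shows "unitary U" and "U ** H ** cadj U = diagm lam"
proof -
  have Ue: "U $ a $ b = cnj (w a $ b)" for a b
    by (simp add: U)
  have cU: "cadj U $ c $ b = w b $ c" for b c
    by (simp add: U cadj_def)
  have "(U ** cadj U) $ a $ b = cinner (w a) (w b)" for a b
    by (simp add: matrix_matrix_mult_def cinner_def Ue cU)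
  then have "U ** cadj U = mat 1"
    by (simp add: vec_eq_iff mat_def orth)
  then show "unitary U"
    by (simp add: unitary_def matrix_left_right_inverse)
  have "(H ** cadj U) $ c $ b = (H *v w b) $ c" for b c
    by (simp add: matrix_matrix_mult_def matrix_vector_mult_def cU)
  then have col: "(H ** cadj U) $ c $ b = lam b * w b $ c" for b c
    by (simp add: ev)
  have "(U ** H ** cadj U) $ a $ b = lam b * cinner (w a) (w b)" for a b
  proof -
    have "(U ** H ** cadj U) $ a $ b = (\<Sum>c\<in>UNIV. U $ a $ c * (H ** cadj U) $ c $ b)"
      unfolding matrix_mul_assoc[symmetric] matrix_matrix_mult_def[of U "H ** cadj U"] by simp
    also have "\<dots> = lam b * cinner (w a) (w b)"
      by (simp add: col Ue cinner_def sum_distrib_left mult_ac)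
    finally show ?thesis .
  qed
  then show "U ** H ** cadj U = diagm lam"
    by (simp add: vec_eq_iff diagm_def orth)
qed

text \<open>Spectral theorem: a Hermitian matrix is unitarily similar to a real diagonal matrix.
  The eigenvalues are real because the diagonal matrix is again Hermitian.\<close>

theorem spectral_hermitian:
  fixes H :: "complex^'n^'n"
  assumes herm: "hermitian H"
  shows "\<exists>U d. unitary U \<and> H = cadj U ** diagm (\<lambda>i. of_real (d i)) ** U"
proof -
  obtain v lam where orth: "\<forall>i<CARD('n). \<forall>j<CARD('n). cinner (v i) (v j) = (if i = j then 1 else 0)"
    and ev: "\<forall>j<CARD('n). H *v v j = lam j *s v j"
    using orthonormal_eigenvectors[OF herm order_refl] by blast
  obtain ix :: "'n \<Rightarrow> nat" where ix: "bij_betw ix UNIV {0..<CARD('n)}"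
    using ex_bij_betw_finite_nat[of "UNIV :: 'n set"] by auto
  have ixl: "ix a < CARD('n)" for a
    using bij_betw_apply[OF ix] by simp
  have ixe: "ix a = ix b \<longleftrightarrow> a = b" for a b
    using inj_eq[OF bij_betw_imp_inj_on[OF ix]] .
  define U where "U = (\<chi> a b. cnj (v (ix a) $ b))"
  have U: "unitary U" and diag: "U ** H ** cadj U = diagm (\<lambda>a. lam (ix a))"
    using orthonormal_eigenbasis_diagonalizes[of "\<lambda>a. v (ix a)" H "\<lambda>a. lam (ix a)" U]
      orth ev ixl by (simp_all add: ixe U_def)
  have "cadj (U ** H ** cadj U) = U ** H ** cadj U"
    using herm by (simp add: hermitian_def cadj_mult matrix_mul_assoc)
  then have diag_herm: "cadj (diagm (\<lambda>a. lam (ix a))) = diagm (\<lambda>a. lam (ix a))"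
    by (simp only: diag)
  have "cnj (lam (ix a)) = lam (ix a)" for a
    using arg_cong[OF diag_herm, of "\<lambda>M. M $ a $ a"] by (simp add: cadj_def diagm_def)
  then have real: "diagm (\<lambda>a. lam (ix a)) = diagm (\<lambda>a. of_real (Re (lam (ix a))))"
    by (simp add: diagm_def vec_eq_iff complex_eq_iff)
  have "H = (cadj U ** U) ** H ** (cadj U ** U)"
    using U by (simp add: unitary_left_inverse)
  also have "\<dots> = cadj U ** (U ** H ** cadj U) ** U"
    by (simp add: matrix_mul_assoc)
  finally have "H = cadj U ** diagm (\<lambda>a. of_real (Re (lam (ix a)))) ** U"
    by (simp only: diag real)
  with U show ?thesis
    by (intro exI[of _ U] exI[of _ "\<lambda>a. Re (lam (ix a))"]) simp
qed

corollary spectral_pos_def: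
  fixes P :: "complex^'n^'n"
  assumes P: "pos_def P"
  shows "\<exists>U d. unitary U \<and> (\<forall>i. 0 < d i) \<and> P = cadj U ** diagm (\<lambda>i. of_real (d i)) ** U"
proof -
  have "hermitian P"
    using P by (simp add: pos_def_def)
  then obtain U d where U: "unitary U" and PU: "P = cadj U ** diagm (\<lambda>i. of_real (d i)) ** U"
    using spectral_hermitian by blast
  have "U ** P ** cadj U = diagm (\<lambda>i. of_real (d i))"
    using U by (simp add: PU matrix_mul_assoc unitary_right_inverse unitary_cancel_right)
  then have "0 < d i" for i
    using pos_def_diag_pos[OF pos_def_unitary_congruence[OF P U], of i] by (simp add: diagm_def)
  with U PU show ?thesis by blast
qed

section \<open>Real powers of positive definite matrices\<close>

text \<open>Functional calculus is well defined: two unitary diagonalisations of the same matrix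
  give the same value of any function applied to the eigenvalues.\<close>

lemma spectral_calculus_unique:
  assumes U: "unitary U" and W: "unitary W"
    and eq: "cadj U ** diagm d ** U = cadj W ** diagm e ** W"
  shows "cadj U ** diagm (\<lambda>i. g (d i)) ** U = cadj W ** diagm (\<lambda>i. g (e i)) ** W"
proof -
  define T where "T = W ** cadj U"
  have "T ** diagm d = W ** (cadj U ** diagm d ** U) ** cadj U"
    using U by (simp add: T_def matrix_mul_assoc unitary_cancel_right)
  also have "\<dots> = diagm e ** T"
    using W by (simp add: eq T_def matrix_mul_assoc unitary_right_inverse)
  finally have TD: "T ** diagm d = diagm e ** T" .
  have "T $ i $ j * d j = e i * T $ i $ j" for i j
    using arg_cong[OF TD, of "\<lambda>M. M $ i $ j"] by (simp add: mult_diagm_nth diagm_mult_nth)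
  then have "T $ i $ j = 0 \<or> d j = e i" for i j
    by (auto simp: mult.commute)
  then have "T $ i $ j * g (d j) = g (e i) * T $ i $ j" for i j
    by (metis mult.commute mult_zero_left)
  then have TG: "T ** diagm (\<lambda>i. g (d i)) = diagm (\<lambda>i. g (e i)) ** T"
    by (simp add: vec_eq_iff mult_diagm_nth diagm_mult_nth)
  have "cadj W ** diagm (\<lambda>i. g (e i)) ** W = cadj W ** (diagm (\<lambda>i. g (e i)) ** T) ** U"
    using U by (simp add: T_def matrix_mul_assoc unitary_cancel_left)
  also have "\<dots> = cadj W ** (T ** diagm (\<lambda>i. g (d i))) ** U"
    by (simp only: TG)
  also have "\<dots> = cadj U ** diagm (\<lambda>i. g (d i)) ** U"
    using W by (simp add: T_def matrix_mul_assoc unitary_left_inverse)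
  finally show ?thesis
    by simp
qed

lemma mpow_eq:
  assumes U: "unitary U" and d: "\<forall>i. 0 < d i"
    and P: "P = cadj U ** diagm (\<lambda>i. of_real (d i)) ** U"
  shows "mpow P t = cadj U ** diagm (\<lambda>i. of_real (d i powr t)) ** U"
proof -
  have mpow_diagm: "mpow P t = (THE Y. \<exists>U D. unitary U \<and> real_diag D \<and> (\<forall>i. 0 < Re (D $ i $ i))
      \<and> P = cadj U ** D ** U \<and> Y = cadj U ** diagm (\<lambda>i. of_real (Re (D $ i $ i) powr t)) ** U)"
    by (simp add: mpow_def diagm_def)
  show ?thesis
    unfolding mpow_diagm
  proof (rule the_equality)
    show "\<exists>U' D. unitary U' \<and> real_diag D \<and> (\<forall>i. 0 < Re (D $ i $ i)) \<and> P = cadj U' ** D ** U'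
        \<and> cadj U ** diagm (\<lambda>i. of_real (d i powr t)) ** U
          = cadj U' ** diagm (\<lambda>i. of_real (Re (D $ i $ i) powr t)) ** U'"
      using U d P real_diag_diagm[of d] by (intro exI[of _ U] exI[of _ "diagm (\<lambda>i. of_real (d i))"])
        (simp add: diagm_def)
  next
    fix Y
    assume "\<exists>U' D. unitary U' \<and> real_diag D \<and> (\<forall>i. 0 < Re (D $ i $ i)) \<and> P = cadj U' ** D ** U'
        \<and> Y = cadj U' ** diagm (\<lambda>i. of_real (Re (D $ i $ i) powr t)) ** U'"
    then obtain U' D where U': "unitary U'" and D: "real_diag D" and P': "P = cadj U' ** D ** U'"
      and Y: "Y = cadj U' ** diagm (\<lambda>i. of_real (Re (D $ i $ i) powr t)) ** U'"
      by blast
    have "cadj U ** diagm (\<lambda>i. of_real (d i)) ** U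
        = cadj U' ** diagm (\<lambda>i. of_real (Re (D $ i $ i))) ** U'"
      using P P' real_diag_eq_diagm[OF D] by simp
    from spectral_calculus_unique[OF U U' this, of "\<lambda>z. of_real (Re z powr t)"]
    show "Y = cadj U ** diagm (\<lambda>i. of_real (d i powr t)) ** U"
      by (simp add: Y)
  qed
qed

lemma mpow_spectral:
  assumes "pos_def P"
  shows "\<exists>U d. unitary U \<and> (\<forall>i. 0 < d i) \<and> P = cadj U ** diagm (\<lambda>i. of_real (d i)) ** U \<and>
    (\<forall>t. mpow P t = cadj U ** diagm (\<lambda>i. of_real (d i powr t)) ** U)"
  using spectral_pos_def[OF assms] mpow_eq by blast

lemma mpow_add:
  assumes "pos_def P"
  shows "mpow P s ** mpow P t = mpow P (s + t)"
proof -
  obtain U d where U: "unitary U" and d: "\<forall>i. 0 < d i"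
    and pow: "\<And>t. mpow P t = cadj U ** diagm (\<lambda>i. of_real (d i powr t)) ** U"
    using mpow_spectral[OF assms] by blast
  have "mpow P s ** mpow P t
      = cadj U ** (diagm (\<lambda>i. of_real (d i powr s)) ** (U ** cadj U)
        ** diagm (\<lambda>i. of_real (d i powr t))) ** U"
    by (simp add: pow matrix_mul_assoc)
  also have "\<dots> = mpow P (s + t)"
    using U d by (simp add: pow unitary_right_inverse diagm_mult powr_add)
  finally show ?thesis .
qed

lemma mpow_0:
  assumes "pos_def P"
  shows "mpow P 0 = mat 1"
proof -
  obtain U d where U: "unitary U" and d: "\<forall>i. 0 < d i"
    and pow: "\<And>t. mpow P t = cadj U ** diagm (\<lambda>i. of_real (d i powr t)) ** U"
    using mpow_spectral[OF assms] by blast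
  have "d i \<noteq> 0" for i
    using d by (metis less_irrefl)
  then have diag: "diagm (\<lambda>i. of_real (d i powr 0)) = mat 1"
    by (simp add: diagm_def mat_def)
  have "mpow P 0 = cadj U ** U"
    by (simp only: pow diag matrix_mul_rid)
  also have "\<dots> = mat 1"
    using U by (rule unitary_left_inverse)
  finally show ?thesis .
qed

lemma mpow_1:
  assumes "pos_def P"
  shows "mpow P 1 = P"
proof -
  obtain U d where "unitary U" and d: "\<forall>i. 0 < d i"
    and pow: "\<And>t. mpow P t = cadj U ** diagm (\<lambda>i. of_real (d i powr t)) ** U"
    and P: "P = cadj U ** diagm (\<lambda>i. of_real (d i)) ** U"
    using mpow_spectral[OF assms] by blast
  have "d i powr 1 = d i" for i
    using d by (simp add: less_imp_le)
  then have "mpow P 1 = cadj U ** diagm (\<lambda>i. of_real (d i)) ** U"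
    by (simp only: pow)
  then show ?thesis
    using P[symmetric] by (rule trans)
qed

lemma mpow_pos_def:
  assumes "pos_def P"
  shows "pos_def (mpow P t)"
proof -
  obtain U d where U: "unitary U" and d: "\<forall>i. 0 < d i"
    and pow: "\<And>t. mpow P t = cadj U ** diagm (\<lambda>i. of_real (d i powr t)) ** U"
    using mpow_spectral[OF assms] by blast
  have pos: "\<forall>i. 0 < d i powr t"
    using d by (simp add: less_imp_neq[symmetric])
  have inj: "U *v x = 0 \<Longrightarrow> x = 0" for x
    using left_invertible_inj[OF unitary_left_inverse[OF U]] .
  show ?thesis
    unfolding pow by (rule pos_def_congruence[OF pos_def_diagm[OF pos] inj])
qed

lemma mpow_hermitian: "pos_def P \<Longrightarrow> cadj (mpow P t) = mpow P t"
  using mpow_pos_def by (auto simp: pos_def_def hermitian_def)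

lemma mpow_cancel:
  "pos_def P \<Longrightarrow> mpow P (- t) ** mpow P t = mat 1"
  "pos_def P \<Longrightarrow> mpow P t ** mpow P (- t) = mat 1"
  by (simp_all add: mpow_add mpow_0)

section \<open>The matrix equation\<close>

definition is_solution ::
    "nat \<Rightarrow> (nat \<Rightarrow> complex^'n^'n) \<Rightarrow> (nat \<Rightarrow> real) \<Rightarrow> complex^'n^'n \<Rightarrow> complex^'n^'n \<Rightarrow> bool" where
  "is_solution m A p Q X \<longleftrightarrow>
     pos_def X \<and> X - (\<Sum>i=1..m. cadj (A i) ** mpow X (p i) ** A i) = Q"

definition factorization ::
    "nat \<Rightarrow> (nat \<Rightarrow> complex^'n^'n) \<Rightarrow> (nat \<Rightarrow> real) \<Rightarrow> complex^'n^'n \<Rightarrow>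
     complex^'n^'n \<Rightarrow> complex^'n^'n \<Rightarrow> complex^'n^'n \<Rightarrow> (nat \<Rightarrow> complex^'n^'n) \<Rightarrow> bool" where
  "factorization m A p Q U M N V \<longleftrightarrow>
     unitary U \<and> real_diag M \<and> loewner_gt M (U ** Q ** cadj U) \<and>
     pos_def N \<and> M - N ** N = U ** Q ** cadj U \<and>
     (\<Sum>i=1..m. cadj (V i) ** V i) = mat 1 \<and>
     (\<forall>i\<in>{1..m}. A i = mpow (cadj U ** M ** U) (- p i / 2) ** V i ** N ** U)"

lemma factorization_imp_solution:
  assumes Q: "pos_def Q" and fact: "factorization m A p Q U M N V"
  shows "is_solution m A p Q (cadj U ** M ** U)"
proof -
  define X where "X = cadj U ** M ** U"
  from fact have U: "unitary U" and N: "pos_def N"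
    and gt: "loewner_gt M (U ** Q ** cadj U)" and MN: "M - N ** N = U ** Q ** cadj U"
    and VV: "(\<Sum>i=1..m. cadj (V i) ** V i) = mat 1"
    and AV: "\<forall>i\<in>{1..m}. A i = mpow X (- p i / 2) ** V i ** N ** U"
    by (simp_all add: factorization_def X_def)
  have "pos_def M"
    using loewner_gt_pos_def[OF gt pos_def_unitary_congruence[OF Q U]] .
  then have X: "pos_def X"
    unfolding X_def using left_invertible_inj[OF unitary_left_inverse[OF U]]
    by (rule pos_def_congruence)
  have cN: "cadj N = N"
    using N by (simp add: pos_def_def hermitian_def)
  have term_i: "cadj (A i) ** mpow X (p i) ** A i = cadj U ** N ** (cadj (V i) ** V i) ** N ** U"
    if "i \<in> {1..m}" for i
  proof -
    have "cadj (A i) ** mpow X (p i) ** A i = cadj U ** N ** cadj (V i)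
        ** ((mpow X (- p i / 2) ** mpow X (p i)) ** mpow X (- p i / 2)) ** V i ** N ** U"
      using AV that X by (simp add: cadj_mult matrix_mul_assoc mpow_hermitian cN)
    also have "(mpow X (- p i / 2) ** mpow X (p i)) ** mpow X (- p i / 2) = mat 1"
      using X by (simp add: mpow_add mpow_0)
    finally show ?thesis
      by (simp add: matrix_mul_assoc)
  qed
  have "(\<Sum>i=1..m. cadj (A i) ** mpow X (p i) ** A i)
      = (\<Sum>i=1..m. (cadj U ** N) ** (cadj (V i) ** V i) ** (N ** U))"
    using term_i by (simp add: matrix_mul_assoc)
  also have "\<dots> = (cadj U ** N) ** (\<Sum>i=1..m. cadj (V i) ** V i) ** (N ** U)"
    by (simp add: sum_matrix_mult_right sum_matrix_mult_left)
  also have "\<dots> = cadj U ** (N ** N) ** U"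
    unfolding VV by (simp add: matrix_mul_assoc)
  also have "\<dots> = cadj U ** (M - U ** Q ** cadj U) ** U"
    by (simp add: MN[symmetric])
  also have "\<dots> = X - (cadj U ** U) ** Q ** (cadj U ** U)"
    by (simp add: X_def matrix_diff_ldistrib matrix_diff_rdistrib matrix_mul_assoc)
  also have "\<dots> = X - Q"
    using U by (simp add: unitary_left_inverse)
  finally show ?thesis
    using X by (simp add: is_solution_def X_def)
qed

text \<open>Each term A i^* X^(p i) A i is a congruence of a positive definite matrix by an
  invertible one, so the sum is positive definite.\<close>

lemma pos_def_sum_congruences:
  fixes A :: "nat \<Rightarrow> complex^'n^'n"
  assumes m: "m \<ge> 1" and inv: "\<forall>i\<in>{1..m}. invertible (A i)" and X: "pos_def X"
  shows "pos_def (\<Sum>i=1..m. cadj (A i) ** mpow X (p i) ** A i)"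
proof (rule pos_def_sum)
  show "\<forall>i\<in>{1..m}. pos_def (cadj (A i) ** mpow X (p i) ** A i)"
  proof
    fix i
    assume "i \<in> {1..m}"
    then have "A i *v x = 0 \<Longrightarrow> x = 0" for x
      using inv invertible_inj by blast
    then show "pos_def (cadj (A i) ** mpow X (p i) ** A i)"
      by (rule pos_def_congruence[OF mpow_pos_def[OF X]])
  qed
qed (use m in auto)

lemma normalized_factors:
  fixes A :: "nat \<Rightarrow> complex^'n^'n"
  assumes X: "pos_def X" and U: "unitary U" and N: "pos_def N"
    and NN: "N ** N = U ** (\<Sum>i=1..m. cadj (A i) ** mpow X (p i) ** A i) ** cadj U"
  shows "\<exists>V. (\<Sum>i=1..m. cadj (V i) ** V i) = mat 1 \<and>
    (\<forall>i. A i = mpow X (- p i / 2) ** V i ** N ** U)"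
proof -
  define Ni where "Ni = mpow N (-1)"
  have NiN: "Ni ** N = mat 1" and NNi: "N ** Ni = mat 1"
    using mpow_cancel[OF N, of 1] by (simp_all add: Ni_def mpow_1[OF N])
  have cNi: "cadj Ni = Ni"
    using N by (simp add: Ni_def mpow_hermitian)
  define V where "V i = mpow X (p i / 2) ** A i ** cadj U ** Ni" for i
  have "cadj (V i) ** V i = (Ni ** U) ** (cadj (A i) ** mpow X (p i) ** A i) ** (cadj U ** Ni)" for i
  proof -
    have "cadj (V i) ** V i
        = Ni ** U ** cadj (A i) ** (mpow X (p i / 2) ** mpow X (p i / 2)) ** A i ** cadj U ** Ni"
      using X by (simp add: V_def cadj_mult cNi mpow_hermitian matrix_mul_assoc)
    also have "mpow X (p i / 2) ** mpow X (p i / 2) = mpow X (p i)"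
      using X by (simp add: mpow_add)
    finally show ?thesis
      by (simp add: matrix_mul_assoc)
  qed
  then have "(\<Sum>i=1..m. cadj (V i) ** V i)
      = (Ni ** U) ** (\<Sum>i=1..m. cadj (A i) ** mpow X (p i) ** A i) ** (cadj U ** Ni)"
    by (simp add: sum_matrix_mult_right sum_matrix_mult_left)
  also have "\<dots> = Ni ** (N ** N) ** Ni"
    unfolding NN by (simp add: matrix_mul_assoc)
  also have "\<dots> = (Ni ** N) ** (N ** Ni)"
    by (simp add: matrix_mul_assoc)
  finally have "(\<Sum>i=1..m. cadj (V i) ** V i) = mat 1"
    by (simp add: NiN NNi)
  moreover have "A i = mpow X (- p i / 2) ** V i ** N ** U" for i
  proof -
    have "mpow X (- p i / 2) ** V i ** N ** U
        = (mpow X (- p i / 2) ** mpow X (p i / 2)) ** A i ** (cadj U ** (Ni ** N) ** U)"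
      by (simp add: V_def matrix_mul_assoc)
    then show ?thesis
      using U X by (simp add: mpow_cancel NiN unitary_left_inverse)
  qed
  ultimately show ?thesis
    by blast
qed

text \<open>Necessity: diagonalise a solution as X = cadj U ** M ** U; then
  M - U ** Q ** cadj U is the positive definite sum of the terms conjugated by U, and
  its square root N yields the factorization.\<close>

lemma solution_imp_factorization:
  fixes A :: "nat \<Rightarrow> complex^'n^'n"
  assumes m: "m \<ge> 1" and inv: "\<forall>i\<in>{1..m}. invertible (A i)"
    and sol: "is_solution m A p Q X"
  shows "\<exists>U M N V. factorization m A p Q U M N V"
proof -
  define S where "S = (\<Sum>i=1..m. cadj (A i) ** mpow X (p i) ** A i)"
  have X: "pos_def X" and eq: "X - S = Q"
    using sol by (simp_all add: is_solution_def S_def)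
  obtain U d where U: "unitary U" and XU: "X = cadj U ** diagm (\<lambda>i. of_real (d i)) ** U"
    using spectral_pos_def[OF X] by blast
  define M where "M = diagm (\<lambda>i. of_real (d i))"
  have "M = U ** X ** cadj U"
    using U by (simp add: XU M_def matrix_mul_assoc unitary_right_inverse unitary_cancel_right)
  then have GS: "M - U ** Q ** cadj U = U ** S ** cadj U"
    using eq by (auto simp: matrix_diff_ldistrib matrix_diff_rdistrib)
  then have G: "pos_def (M - U ** Q ** cadj U)"
    using pos_def_unitary_congruence[OF pos_def_sum_congruences[OF m inv X] U] by (simp add: S_def)
  define N where "N = mpow (M - U ** Q ** cadj U) (1/2)"
  have N: "pos_def N"
    using G by (simp add: N_def mpow_pos_def)
  have NN: "N ** N = M - U ** Q ** cadj U"
    using G by (simp add: N_def mpow_add mpow_1)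
  obtain V where VV: "(\<Sum>i=1..m. cadj (V i) ** V i) = mat 1"
    and AV: "\<forall>i. A i = mpow X (- p i / 2) ** V i ** N ** U"
    using normalized_factors[OF X U N NN[unfolded GS S_def]] by blast
  have "factorization m A p Q U M N V"
    unfolding factorization_def using U N NN G VV AV
    by (simp add: M_def real_diag_diagm loewner_gt_def XU)
  then show ?thesis
    by blast
qed

theorem theorem2:
  fixes m :: nat and A :: "nat \<Rightarrow> complex^'n^'n" and p :: "nat \<Rightarrow> real"
    and Q :: "complex^'n^'n"
  assumes "m \<ge> 1"
    and "\<forall>i\<in>{1..m}. invertible (A i)"
    and "\<forall>i\<in>{1..m}. 0 < p i"
    and "pos_def Q"
  shows "((\<exists>X. pos_def X \<and> X - (\<Sum>i=1..m. cadj (A i) ** mpow X (p i) ** A i) = Q) \<longleftrightarrow>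
          (\<exists>U M N V. unitary U \<and> real_diag M \<and> loewner_gt M (U ** Q ** cadj U) \<and>
             pos_def N \<and> M - N ** N = U ** Q ** cadj U \<and>
             (\<Sum>i=1..m. cadj (V i) ** V i) = mat 1 \<and>
             (\<forall>i\<in>{1..m}. A i = mpow (cadj U ** M ** U) (- p i / 2) ** V i ** N ** U)))
       \<and> (\<forall>U M N V. unitary U \<and> real_diag M \<and> loewner_gt M (U ** Q ** cadj U) \<and>
             pos_def N \<and> M - N ** N = U ** Q ** cadj U \<and>
             (\<Sum>i=1..m. cadj (V i) ** V i) = mat 1 \<and>
             (\<forall>i\<in>{1..m}. A i = mpow (cadj U ** M ** U) (- p i / 2) ** V i ** N ** U)
           \<longrightarrow> (let X = cadj U ** M ** U in
                 pos_def X \<and> X - (\<Sum>i=1..m. cadj (A i) ** mpow X (p i) ** A i) = Q))"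
proof -
  have sufficient: "\<forall>U M N V. factorization m A p Q U M N V
      \<longrightarrow> is_solution m A p Q (cadj U ** M ** U)"
    using factorization_imp_solution[OF assms(4)] by blast
  have necessary: "(\<exists>X. is_solution m A p Q X) \<longrightarrow> (\<exists>U M N V. factorization m A p Q U M N V)"
    using solution_imp_factorization[OF assms(1,2)] by blast
  show ?thesis
    using sufficient necessary unfolding is_solution_def factorization_def Let_def by blast
qed

end
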